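(* Let $m$ be a universal probability and let $M$ be a universal semi-POVM. Then there exist $c_1>0$ and $c_2>0$ such that for every density matrix $\rho\in\mathrm{Her}(N)$ and every $s\in\Sigma^*$, $$c_1\,m(s)\le\operatorname{tr}(\rho M(s))\le c_2\,m(s).$$
   Context: $N$ is a fixed positive integer; $\Sigma^*$ is the set of finite binary strings. $\mathrm{Her}(N)$ is the set of $N\times N$ Hermitian matrices and $\mathrm{Her}_Q(N)$ those with entries in $\{a+ib:a,b\in\mathbb{Q}\}$; $A\leqslant B$ means $B-A$ is positive semi-definite. A density matrix is $\rho\in\mathrm{Her}(N)$, $0\leqslant\rho$, $\operatorname{tr}\rho=1$. A lower-computable semi-measure is a function $r:\Sigma^*\to[0,\infty)$ with $\sum_s r(s)\le 1$ such that there is a total recursive $f:\mathbb{N}\times\Sigma^*\to\mathbb{Q}$ with $\lim_{n}f(n,s)=r(s)$ and $f(n,s)\le f(n+1,s)$ for all $n,s$. A universal probability is a lower-computable semi-measure $m$ such that for every lower-computable semi-measure $r$ there is $c>0$ with $c\,r(s)\le m(s)$ for all $s$. A semi-POVM on $\Sigma^*$ is a map $R:\Sigma^*\to\mathrm{Her}(N)$ with $0\leqslant R(s)$ for all $s$ and $\sum_s R(s)\leqslant I$. A lower-computable semi-POVM is a semi-POVM $R$ for which there is a total recursive $f:\mathbb{N}\times\Sigma^*\to\mathrm{Her}_Q(N)$ with $\lim_{n}f(n,s)=R(s)$ and $f(n,s)\leqslant R(s)$ for all $n,s$. A universal semi-POVM is a lower-computable semi-POVM $M$ such that for every lower-computable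 semi-POVM $R$ there is $c>0$ with $c\,R(s)\leqslant M(s)$ for all $s\in\Sigma^*$. *)

theory Defs
  imports "HOL-Analysis.Analysis"
begin

type_synonym bstring = "bool list"

text \<open>Bijective coding of binary strings by natural numbers (bijective base 2).\<close>
fun str_code :: "bstring \<Rightarrow> nat" where
  "str_code [] = 0"
| "str_code (b # s) = 2 * str_code s + (if b then 2 else 1)"

datatype recf = Zr | Sc | Id nat | Cn recf "recf list" | Pr recf recf | Mn recf

inductive rec_eval :: "recf \<Rightarrow> nat list \<Rightarrow> nat \<Rightarrow> bool" where
  zero: "rec_eval Zr xs 0"
| succ: "rec_eval Sc (x # xs) (Suc x)"
| proj: "i < length xs \<Longrightarrow> rec_eval (Id i) xs (xs ! i)"
| comp: "list_all2 (\<lambda>g y. rec_eval g xs y) gs ys \<Longrightarrow> rec_eval f ys z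
          \<Longrightarrow> rec_eval (Cn f gs) xs z"
| pr0:  "rec_eval f xs z \<Longrightarrow> rec_eval (Pr f g) (0 # xs) z"
| prS:  "rec_eval (Pr f g) (n # xs) r \<Longrightarrow> rec_eval g (n # r # xs) z
          \<Longrightarrow> rec_eval (Pr f g) (Suc n # xs) z"
| mu:   "rec_eval f (n # xs) 0 \<Longrightarrow> (\<forall>m<n. \<exists>y. rec_eval f (m # xs) (Suc y))
          \<Longrightarrow> rec_eval (Mn f) xs n"

definition total_recursive2 :: "(nat \<Rightarrow> nat \<Rightarrow> nat) \<Rightarrow> bool" where
  "total_recursive2 g \<longleftrightarrow> (\<exists>r. \<forall>x y. rec_eval r [x, y] (g x y))"

text \<open>A function \<open>\<nat> \<times> \<Sigma>^* \<rightarrow> \<rat>\<close> is total recursive: some total recursive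
  functions compute, from (n, code of s), a numerator (as a difference of two naturals)
  and a positive denominator of its value.\<close>
definition rec_rat_fun :: "(nat \<Rightarrow> bstring \<Rightarrow> rat) \<Rightarrow> bool" where
  "rec_rat_fun f \<longleftrightarrow> (\<exists>a b d. total_recursive2 a \<and> total_recursive2 b \<and> total_recursive2 d \<and>
     (\<forall>n s. f n s = (of_nat (a n (str_code s)) - of_nat (b n (str_code s)))
                    / of_nat (Suc (d n (str_code s)))))"

definition semi_measure :: "(bstring \<Rightarrow> real) \<Rightarrow> bool" where
  "semi_measure r \<longleftrightarrow> (\<forall>s. 0 \<le> r s) \<and> r summable_on UNIV \<and> (\<Sum>\<^sub>\<infinity>s. r s) \<le> 1"

definition lower_computable_semi_measure :: "(bstring \<Rightarrow> real) \<Rightarrow> bool" where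
  "lower_computable_semi_measure r \<longleftrightarrow> semi_measure r \<and>
     (\<exists>f. rec_rat_fun f \<and> (\<forall>s. (\<lambda>n. real_of_rat (f n s)) \<longlonglongrightarrow> r s)
          \<and> (\<forall>n s. f n s \<le> f (Suc n) s))"

definition universal_probability :: "(bstring \<Rightarrow> real) \<Rightarrow> bool" where
  "universal_probability m \<longleftrightarrow> lower_computable_semi_measure m \<and>
     (\<forall>r. lower_computable_semi_measure r \<longrightarrow> (\<exists>c>0. \<forall>s. c * r s \<le> m s))"

section \<open>Hermitian matrices (N = CARD('n))\<close>

type_synonym 'n cmat = "complex^'n^'n"

definition adjoint_mat :: "'n::finite cmat \<Rightarrow> 'n cmat" where
  "adjoint_mat A = (\<chi> i j. cnj (A $ j $ i))"

definition hermitian :: "'n::finite cmat \<Rightarrow> bool" where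
  "hermitian A \<longleftrightarrow> adjoint_mat A = A"

definition psd :: "'n::finite cmat \<Rightarrow> bool" where
  "psd A \<longleftrightarrow> hermitian A \<and>
     (\<forall>x::complex^'n. 0 \<le> Re (\<Sum>i\<in>UNIV. \<Sum>j\<in>UNIV. cnj (x $ i) * A $ i $ j * x $ j))"

definition loewner_le :: "'n::finite cmat \<Rightarrow> 'n cmat \<Rightarrow> bool" where
  "loewner_le A B \<longleftrightarrow> hermitian A \<and> hermitian B \<and> psd (B - A)"

definition density_matrix :: "'n::finite cmat \<Rightarrow> bool" where
  "density_matrix \<rho> \<longleftrightarrow> hermitian \<rho> \<and> psd \<rho> \<and> trace \<rho> = 1"

definition gauss_rat :: "complex \<Rightarrow> bool" where
  "gauss_rat z \<longleftrightarrow> Re z \<in> \<rat> \<and> Im z \<in> \<rat>"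

definition her_Q :: "'n::finite cmat \<Rightarrow> bool" where
  "her_Q A \<longleftrightarrow> hermitian A \<and> (\<forall>i j. gauss_rat (A $ i $ j))"

definition semi_POVM :: "(bstring \<Rightarrow> 'n::finite cmat) \<Rightarrow> bool" where
  "semi_POVM R \<longleftrightarrow> (\<forall>s. psd (R s)) \<and> R summable_on UNIV \<and>
     loewner_le (\<Sum>\<^sub>\<infinity>s. R s) (mat 1)"

definition rec_herQ_fun :: "(nat \<Rightarrow> bstring \<Rightarrow> 'n::finite cmat) \<Rightarrow> bool" where
  "rec_herQ_fun f \<longleftrightarrow> (\<forall>n s. her_Q (f n s)) \<and>
     (\<forall>i j. \<exists>p q. rec_rat_fun p \<and> rec_rat_fun q \<and>
        (\<forall>n s. Re (f n s $ i $ j) = real_of_rat (p n s) \<and> Im (f n s $ i $ j) = real_of_rat (q n s)))"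

definition lower_computable_semi_POVM :: "(bstring \<Rightarrow> 'n::finite cmat) \<Rightarrow> bool" where
  "lower_computable_semi_POVM R \<longleftrightarrow> semi_POVM R \<and>
     (\<exists>f. rec_herQ_fun f \<and> (\<forall>s. (\<lambda>n. f n s) \<longlonglongrightarrow> R s) \<and> (\<forall>n s. loewner_le (f n s) (R s)))"

definition universal_semi_POVM :: "(bstring \<Rightarrow> 'n::finite cmat) \<Rightarrow> bool" where
  "universal_semi_POVM M \<longleftrightarrow> lower_computable_semi_POVM M \<and>
     (\<forall>R::bstring \<Rightarrow> 'n cmat. lower_computable_semi_POVM R \<longrightarrow>
        (\<exists>c>0. \<forall>s. loewner_le (c *\<^sub>R R s) (M s)))"

end

theory Submission
  imports Defs
begin

text \<open>Both bounds come from comparing each universal object with an object built from the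
  other. Multiplying the identity by a lower-computable semi-measure gives a lower-computable
  semi-POVM, so universality of \<open>M\<close> yields \<open>c m(s) I \<le> M(s)\<close>; pairing with a density matrix,
  and using that the trace of a product of two positive semi-definite matrices is nonnegative
  (peel off rank-one terms of a Cholesky decomposition), gives the lower bound. Conversely, every
  diagonal entry \<open>s \<mapsto> M(s)\<^sub>i\<^sub>i\<close> is a lower-computable semi-measure (once its rational
  approximations are replaced by their running maxima), so \<open>m\<close> dominates it. As
  \<open>|\<rho>\<^sub>i\<^sub>j| \<le> 1\<close> and \<open>|M(s)\<^sub>i\<^sub>j| \<le> (M(s)\<^sub>i\<^sub>i + M(s)\<^sub>j\<^sub>j)/2\<close>, we get
  \<open>tr(\<rho> M(s)) \<le> N tr M(s)\<close>, which gives the upper bound.\<close>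

section \<open>Positive semi-definite matrices\<close>

definition sesq_form :: "'n::finite cmat \<Rightarrow> complex^'n \<Rightarrow> complex^'n \<Rightarrow> complex" where
  "sesq_form A x y = (\<Sum>i\<in>UNIV. \<Sum>j\<in>UNIV. cnj (x $ i) * A $ i $ j * y $ j)"

lemma hermitian_cnj_entry: "hermitian A \<Longrightarrow> cnj (A $ i $ j) = A $ j $ i"
  unfolding hermitian_def adjoint_mat_def by (metis vec_lambda_beta)

lemma hermitian_diag_real: "hermitian A \<Longrightarrow> A $ i $ i = of_real (Re (A $ i $ i))"
  using hermitian_cnj_entry[of A i i] by (simp add: complex_eq_iff)

lemma sesq_form_axis_right: "sesq_form A x (axis j 1) = (\<Sum>i\<in>UNIV. cnj (x $ i) * A $ i $ j)"
  unfolding sesq_form_def axis_def by (simp add: if_distrib cong: if_cong)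

lemma sesq_form_axis: "sesq_form A (axis i 1) (axis j 1) = A $ i $ j"
  unfolding sesq_form_axis_right
  by (simp add: axis_def if_distrib[of cnj] if_distrib[of "\<lambda>z. z * _"] cong: if_cong)

lemma sesq_form_swap:
  assumes "hermitian A"
  shows "sesq_form A y x = cnj (sesq_form A x y)"
  unfolding sesq_form_def by (subst sum.swap) (simp add: hermitian_cnj_entry[OF assms] ac_simps)

lemma sesq_form_diff_left: "sesq_form A (x - y) z = sesq_form A x z - sesq_form A y z"
  unfolding sesq_form_def by (simp add: algebra_simps sum_subtractf)

lemma sesq_form_diff_right: "sesq_form A z (x - y) = sesq_form A z x - sesq_form A z y"
  unfolding sesq_form_def by (simp add: algebra_simps sum_subtractf)

lemma sesq_form_scale_left: "sesq_form A (c *s x) z = cnj c * sesq_form A x z"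
  unfolding sesq_form_def by (simp add: sum_distrib_left mult.assoc)

lemma sesq_form_scale_right: "sesq_form A z (c *s x) = c * sesq_form A z x"
  unfolding sesq_form_def by (simp add: sum_distrib_left mult.assoc mult.left_commute)

lemma psd_sesq_form_nonneg: "psd A \<Longrightarrow> 0 \<le> Re (sesq_form A x x)"
  unfolding psd_def sesq_form_def by blast

lemma psd_diag_nonneg: "psd A \<Longrightarrow> 0 \<le> Re (A $ i $ i)"
  using psd_sesq_form_nonneg[of A "axis i 1"] by (simp only: sesq_form_axis)

lemma le_mult_if_quadratic_nonneg:
  fixes a q C :: real
  assumes quadratic: "\<And>t. 0 \<le> a - 2 * t * q + t\<^sup>2 * q * C" and "0 \<le> C"
  shows "q \<le> a * C"
proof (cases "C = 0")
  case True
  show ?thesis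
  proof (rule ccontr)
    assume "\<not> q \<le> a * C"
    then have "q > 0" using True by simp
    then show False using quadratic[of "(a + 1) / (2 * q)"] True by (simp add: field_simps)
  qed
next
  case False
  then have "C > 0" using \<open>0 \<le> C\<close> by simp
  then show ?thesis using quadratic[of "1 / C"] by (simp add: field_simps power2_eq_square)
qed

lemma psd_cauchy_schwarz:
  assumes "psd A"
  shows "(cmod (sesq_form A x y))\<^sup>2 \<le> Re (sesq_form A x x) * Re (sesq_form A y y)"
proof -
  have hermitian: "hermitian A" using assms psd_def by blast
  define b where "b = sesq_form A y x"
  define C where "C = Re (sesq_form A y y)"
  have xy: "sesq_form A x y = cnj b" using sesq_form_swap[OF hermitian, of x y] b_def by simp
  have yy: "sesq_form A y y = of_real C"
    using sesq_form_swap[OF hermitian, of y y] unfolding C_def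
    by (metis Reals_cnj_iff of_real_Re)
  have b_sq: "b * cnj b = of_real ((cmod b)\<^sup>2)" "cnj b * b = of_real ((cmod b)\<^sup>2)"
    by (simp_all only: complex_norm_square mult.commute)
  have "0 \<le> Re (sesq_form A x x) - 2 * t * (cmod b)\<^sup>2 + t\<^sup>2 * (cmod b)\<^sup>2 * C" for t :: real
  proof -
    let ?z = "x - (of_real t * b) *s y"
    have "sesq_form A ?z ?z = sesq_form A x x - of_real t * (b * cnj b) - of_real t * (cnj b * b)
        + of_real t * of_real t * (cnj b * b) * of_real C"
      by (simp add: sesq_form_diff_left sesq_form_diff_right sesq_form_scale_left
          sesq_form_scale_right xy yy b_def[symmetric] algebra_simps)
    then have "Re (sesq_form A ?z ?z) =
        Re (sesq_form A x x) - 2 * t * (cmod b)\<^sup>2 + t\<^sup>2 * (cmod b)\<^sup>2 * C"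
      unfolding b_sq by (simp add: power2_eq_square)
    then show ?thesis using psd_sesq_form_nonneg[OF assms, of ?z] by simp
  qed
  then have "(cmod b)\<^sup>2 \<le> Re (sesq_form A x x) * C"
    using psd_sesq_form_nonneg[OF assms, of y] C_def by (intro le_mult_if_quadratic_nonneg) auto
  then show ?thesis using xy C_def by simp
qed

lemma psd_entry_norm_sq_le: "psd A \<Longrightarrow> (cmod (A $ i $ j))\<^sup>2 \<le> Re (A $ i $ i) * Re (A $ j $ j)"
  using psd_cauchy_schwarz[of A "axis i 1" "axis j 1"] by (simp only: sesq_form_axis)

lemma psd_entry_norm_le: "psd A \<Longrightarrow> cmod (A $ i $ j) \<le> (Re (A $ i $ i) + Re (A $ j $ j)) / 2"
  using real_le_rsqrt[OF psd_entry_norm_sq_le]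
    arith_geo_mean_sqrt[OF psd_diag_nonneg psd_diag_nonneg]
  by (meson order_trans)

lemma trace_matrix_mult: "trace (A ** B) = (\<Sum>i\<in>UNIV. \<Sum>j\<in>UNIV. A $ i $ j * B $ j $ i)"
  unfolding trace_def matrix_matrix_mult_def by simp

lemma trace_mult_diff_left:
  fixes A B C :: "'n::finite cmat"
  shows "trace ((A - C) ** B) = trace (A ** B) - trace (C ** B)"
  unfolding trace_matrix_mult by (simp add: left_diff_distrib sum_subtractf)

lemma trace_mult_diff_right:
  fixes A B R :: "'n::finite cmat"
  shows "trace (R ** (A - B)) = trace (R ** A) - trace (R ** B)"
  unfolding trace_matrix_mult by (simp add: right_diff_distrib sum_subtractf)

lemma sesq_form_diff_matrix: "sesq_form (A - B) x y = sesq_form A x y - sesq_form B x y"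
  unfolding sesq_form_def by (simp add: algebra_simps sum_subtractf)

text \<open>Subtracting \<open>v v\<^sup>* / R\<^sub>k\<^sub>k\<close>, where \<open>v\<close> is the \<open>k\<close>-th column of \<open>R\<close>, is one step of
  a Cholesky decomposition: it clears row and column \<open>k\<close>. If \<open>R\<^sub>k\<^sub>k = 0\<close>, division by zero
  makes it the identity.\<close>
definition cholesky_step :: "'n::finite cmat \<Rightarrow> 'n \<Rightarrow> 'n cmat" where
  "cholesky_step R k = R - (\<chi> i j. R $ i $ k * cnj (R $ j $ k) / R $ k $ k)"

lemma psd_cholesky_step:
  fixes R :: "'n::finite cmat"
  assumes "psd R"
  shows "psd (cholesky_step R k)"
proof (cases "R $ k $ k = 0")
  case True
  then have "cholesky_step R k = R" by (simp add: cholesky_step_def vec_eq_iff)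
  with assms show ?thesis by simp
next
  case False
  have hermitian: "hermitian R" using assms psd_def by blast
  define d where "d = Re (R $ k $ k)"
  have Rkk: "R $ k $ k = of_real d" unfolding d_def by (rule hermitian_diag_real[OF hermitian])
  have "d \<noteq> 0" using False Rkk by auto
  with psd_diag_nonneg[OF assms, of k] have "d > 0" unfolding d_def by simp
  have "hermitian (cholesky_step R k)"
    unfolding hermitian_def adjoint_mat_def cholesky_step_def Rkk
    by (simp add: vec_eq_iff hermitian_cnj_entry[OF hermitian] mult.commute)
  moreover have "0 \<le> Re (sesq_form (cholesky_step R k) x x)" for x :: "complex^'n"
  proof -
    define w where "w = sesq_form R x (axis k 1)"
    have "sesq_form (\<chi> i j. R $ i $ k * cnj (R $ j $ k) / R $ k $ k) x x = w * cnj w / R $ k $ k"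
      unfolding w_def sesq_form_axis_right unfolding sesq_form_def
      by (simp add: sum_product divide_inverse sum_distrib_left ac_simps)
    also have "\<dots> = of_real ((cmod w)\<^sup>2 / d)"
      unfolding Rkk by (simp only: of_real_divide complex_norm_square)
    finally have "Re (sesq_form (cholesky_step R k) x x) = Re (sesq_form R x x) - (cmod w)\<^sup>2 / d"
      unfolding cholesky_step_def sesq_form_diff_matrix by simp
    moreover have "(cmod w)\<^sup>2 \<le> Re (sesq_form R x x) * d"
      using psd_cauchy_schwarz[OF assms, of x "axis k 1"] unfolding w_def sesq_form_axis d_def .
    then have "(cmod w)\<^sup>2 / d \<le> Re (sesq_form R x x)"
      using \<open>d > 0\<close> by (simp add: pos_divide_le_eq)
    ultimately show ?thesis by simp
  qed
  ultimately show ?thesis unfolding psd_def sesq_form_def by blast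
qed

lemma cholesky_step_diag_support:
  fixes R :: "'n::finite cmat"
  assumes "psd R" and "R $ k $ k \<noteq> 0"
  shows "{i. cholesky_step R k $ i $ i \<noteq> 0} \<subset> {i. R $ i $ i \<noteq> 0}"
proof -
  have "R $ i $ k = 0" if "R $ i $ i = 0" for i
    using psd_entry_norm_sq_le[OF assms(1), of i k] that by simp
  then have "{i. cholesky_step R k $ i $ i \<noteq> 0} \<subseteq> {i. R $ i $ i \<noteq> 0} - {k}"
    using assms hermitian_cnj_entry[of R k k] by (auto simp: cholesky_step_def psd_def)
  then show ?thesis using assms(2) by blast
qed

lemma trace_mult_cholesky_step_le:
  fixes R B :: "'n::finite cmat"
  assumes "psd R" and "psd B"
  shows "Re (trace (cholesky_step R k ** B)) \<le> Re (trace (R ** B))"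
proof -
  define v :: "complex^'n" where "v = (\<chi> i. R $ i $ k)"
  have "trace ((\<chi> i j. R $ i $ k * cnj (R $ j $ k) / R $ k $ k) ** B) = sesq_form B v v / R $ k $ k"
    unfolding trace_matrix_mult sesq_form_def v_def
    by (subst sum.swap) (simp add: divide_inverse sum_distrib_left ac_simps)
  then have "trace (R ** B) = trace (cholesky_step R k ** B) + sesq_form B v v / R $ k $ k"
    by (simp add: cholesky_step_def trace_mult_diff_left)
  moreover have "0 \<le> Re (sesq_form B v v / R $ k $ k)"
    using psd_sesq_form_nonneg[OF assms(2), of v] psd_diag_nonneg[OF assms(1), of k]
      hermitian_diag_real[of R k] assms(1) unfolding psd_def
    by (metis Re_divide_of_real divide_nonneg_nonneg)
  ultimately show ?thesis by simp
qed

lemma trace_mult_psd_nonneg: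
  assumes "psd R" and "psd B"
  shows "0 \<le> Re (trace (R ** B))"
  using assms(1)
proof (induction "card {i. R $ i $ i \<noteq> 0}" arbitrary: R rule: less_induct)
  case less
  show ?case
  proof (cases "\<exists>k. R $ k $ k \<noteq> 0")
    case True
    then obtain k where "R $ k $ k \<noteq> 0" by blast
    then have "card {i. cholesky_step R k $ i $ i \<noteq> 0} < card {i. R $ i $ i \<noteq> 0}"
      using cholesky_step_diag_support[OF less.prems] by (simp add: psubset_card_mono)
    then have "0 \<le> Re (trace (cholesky_step R k ** B))"
      using less.hyps psd_cholesky_step[OF less.prems] by blast
    also have "\<dots> \<le> Re (trace (R ** B))"
      by (rule trace_mult_cholesky_step_le[OF less.prems assms(2)])
    finally show ?thesis .
  next
    case False
    then have "R = 0"
      using psd_entry_norm_sq_le[OF less.prems] by (simp add: vec_eq_iff)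
    then show ?thesis by (simp add: trace_def)
  qed
qed

lemma density_matrix_entry_norm_le:
  assumes "density_matrix \<rho>"
  shows "cmod (\<rho> $ i $ j) \<le> 1"
proof -
  have psd: "psd \<rho>" using assms density_matrix_def by blast
  have "Re (\<rho> $ l $ l) \<le> (\<Sum>i\<in>UNIV. Re (\<rho> $ i $ i))" for l
    by (rule member_le_sum) (simp_all add: psd_diag_nonneg[OF psd])
  also have "(\<Sum>i\<in>UNIV. Re (\<rho> $ i $ i)) = 1"
    using assms unfolding density_matrix_def trace_def by (metis Re_sum one_complex.simps(1))
  finally have diag_le: "Re (\<rho> $ l $ l) \<le> 1" for l .
  show ?thesis using psd_entry_norm_le[OF psd, of i j] diag_le[of i] diag_le[of j] by argo
qed

lemma trace_mult_density_le:
  fixes \<rho> A :: "'n::finite cmat"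
  assumes "density_matrix \<rho>" and "psd A"
  shows "Re (trace (\<rho> ** A)) \<le> real CARD('n) * Re (trace A)"
proof -
  have "Re (trace (\<rho> ** A)) = (\<Sum>i\<in>UNIV. \<Sum>j\<in>UNIV. Re (\<rho> $ i $ j * A $ j $ i))"
    unfolding trace_matrix_mult by simp
  also have "\<dots> \<le> (\<Sum>i\<in>UNIV. \<Sum>j\<in>UNIV. (Re (A $ j $ j) + Re (A $ i $ i)) / 2)"
  proof (intro sum_mono)
    fix i j
    have "Re (\<rho> $ i $ j * A $ j $ i) \<le> cmod (\<rho> $ i $ j) * cmod (A $ j $ i)"
      by (metis complex_Re_le_cmod norm_mult)
    also have "\<dots> \<le> cmod (A $ j $ i)"
      using density_matrix_entry_norm_le[OF assms(1)] by (simp add: mult_left_le_one_le)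
    also have "\<dots> \<le> (Re (A $ j $ j) + Re (A $ i $ i)) / 2" by (rule psd_entry_norm_le[OF assms(2)])
    finally show "Re (\<rho> $ i $ j * A $ j $ i) \<le> (Re (A $ j $ j) + Re (A $ i $ i)) / 2" .
  qed
  also have "\<dots> = real CARD('n) * Re (trace A)"
    by (simp add: trace_def sum.distrib add_divide_distrib sum_divide_distrib[symmetric]
        sum_distrib_left[symmetric])
  finally show ?thesis .
qed

lemma uniform_trace_mult_density_bound:
  fixes A :: "'a \<Rightarrow> 'n::finite cmat"
  assumes "\<And>i. C i > 0" and "\<And>i s. C i * Re (A s $ i $ i) \<le> x s" and "\<And>s. psd (A s)"
  shows "\<exists>c>0. \<forall>\<rho> s. density_matrix \<rho> \<longrightarrow> Re (trace (\<rho> ** A s)) \<le> c * x s"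
proof -
  define c where "c = real CARD('n) * (\<Sum>i\<in>UNIV. 1 / C i)"
  have "c > 0" unfolding c_def using assms(1) by (intro mult_pos_pos sum_pos) auto
  moreover have "Re (trace (\<rho> ** A s)) \<le> c * x s" if "density_matrix \<rho>" for \<rho> s
  proof -
    have "Re (trace (\<rho> ** A s)) \<le> real CARD('n) * (\<Sum>i\<in>UNIV. Re (A s $ i $ i))"
      using trace_mult_density_le[OF that assms(3)] by (simp add: trace_def)
    also have "\<dots> \<le> real CARD('n) * (\<Sum>i\<in>UNIV. x s / C i)"
      using assms(1,2) by (intro mult_left_mono sum_mono) (auto simp: field_simps)
    finally show ?thesis by (simp add: c_def sum_distrib_left sum_distrib_right)
  qed
  ultimately show ?thesis by blast
qed

lemma scalar_mat_entry:
  "((k::real) *\<^sub>R mat 1 :: 'n::finite cmat) $ i $ j = (if i = j then of_real k else 0)"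
  unfolding vector_scaleR_component mat_def by (simp add: of_real_def)

lemma sesq_form_scalar_mat:
  "sesq_form ((k::real) *\<^sub>R mat 1) x y = of_real k * (\<Sum>i\<in>UNIV. cnj (x $ i) * y $ i)"
  unfolding sesq_form_def scalar_mat_entry
  by (simp add: if_distrib[of "\<lambda>z. _ * z"] if_distrib[of "\<lambda>z. z * _"] sum_distrib_left ac_simps
      cong: if_cong)

lemma hermitian_scalar_mat: "hermitian ((k::real) *\<^sub>R mat 1 :: 'n::finite cmat)"
  unfolding hermitian_def adjoint_mat_def vec_eq_iff scalar_mat_entry by simp

lemma trace_mult_scalar_mat:
  fixes R :: "'n::finite cmat"
  shows "trace (R ** ((k::real) *\<^sub>R mat 1)) = of_real k * trace R"
  unfolding trace_matrix_mult scalar_mat_entry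
  by (simp add: trace_def if_distrib[of "\<lambda>z. _ * z"] sum_distrib_left ac_simps cong: if_cong)

lemma psd_scalar_mat: "0 \<le> k \<Longrightarrow> psd ((k::real) *\<^sub>R mat 1 :: 'n::finite cmat)"
  unfolding psd_def sesq_form_def[symmetric] sesq_form_scalar_mat
  by (simp add: hermitian_scalar_mat mult.commute[of "cnj _"] complex_norm_square[symmetric]
      sum_nonneg)

lemma loewner_le_scalar_mat:
  "(a::real) \<le> b \<Longrightarrow> loewner_le (a *\<^sub>R mat 1) (b *\<^sub>R mat 1 :: 'n::finite cmat)"
  unfolding loewner_le_def
  by (metis hermitian_scalar_mat psd_scalar_mat diff_ge_0_iff_ge scaleR_diff_left)

lemma trace_mult_density_ge:
  assumes "density_matrix \<rho>" and "loewner_le (c *\<^sub>R mat 1) A"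
  shows "c \<le> Re (trace (\<rho> ** A))"
proof -
  have "0 \<le> Re (trace (\<rho> ** (A - c *\<^sub>R mat 1)))"
    using assms unfolding density_matrix_def loewner_le_def by (blast intro: trace_mult_psd_nonneg)
  then show ?thesis
    using assms(1) by (simp add: trace_mult_diff_right trace_mult_scalar_mat density_matrix_def)
qed

section \<open>Recursive functions\<close>

definition recfn :: "nat \<Rightarrow> (nat list \<Rightarrow> nat) \<Rightarrow> bool" where
  "recfn k F \<longleftrightarrow> (\<exists>r. \<forall>xs. length xs = k \<longrightarrow> rec_eval r xs (F xs))"

lemma recfn_cong: "recfn k F \<Longrightarrow> (\<And>xs. length xs = k \<Longrightarrow> F xs = G xs) \<Longrightarrow> recfn k G"
  unfolding recfn_def by metis

lemma recfn_zero: "recfn k (\<lambda>_. 0)"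
  unfolding recfn_def by (blast intro: rec_eval.zero)

lemma recfn_proj: "i < k \<Longrightarrow> recfn k (\<lambda>xs. xs ! i)"
  unfolding recfn_def by (metis rec_eval.proj)

lemma recfn_comp1:
  assumes "recfn 1 F" and "recfn k G"
  shows "recfn k (\<lambda>xs. F [G xs])"
proof -
  obtain f where "\<And>ys. length ys = 1 \<Longrightarrow> rec_eval f ys (F ys)" using assms(1) recfn_def by blast
  moreover obtain g where "\<And>xs. length xs = k \<Longrightarrow> rec_eval g xs (G xs)"
    using assms(2) recfn_def by blast
  ultimately have "rec_eval (Cn f [g]) xs (F [G xs])" if "length xs = k" for xs
    using that by (intro rec_eval.comp[where ys = "[G xs]"]) auto
  then show ?thesis unfolding recfn_def by blast
qed

lemma recfn_comp2:
  assumes "recfn 2 F" and "recfn k G\<^sub>1" and "recfn k G\<^sub>2"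
  shows "recfn k (\<lambda>xs. F [G\<^sub>1 xs, G\<^sub>2 xs])"
proof -
  obtain f where "\<And>ys. length ys = 2 \<Longrightarrow> rec_eval f ys (F ys)" using assms(1) recfn_def by blast
  moreover obtain g\<^sub>1 where "\<And>xs. length xs = k \<Longrightarrow> rec_eval g\<^sub>1 xs (G\<^sub>1 xs)"
    using assms(2) recfn_def by blast
  moreover obtain g\<^sub>2 where "\<And>xs. length xs = k \<Longrightarrow> rec_eval g\<^sub>2 xs (G\<^sub>2 xs)"
    using assms(3) recfn_def by blast
  ultimately have "rec_eval (Cn f [g\<^sub>1, g\<^sub>2]) xs (F [G\<^sub>1 xs, G\<^sub>2 xs])" if "length xs = k" for xs
    using that by (intro rec_eval.comp[where ys = "[G\<^sub>1 xs, G\<^sub>2 xs]"]) auto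
  then show ?thesis unfolding recfn_def by blast
qed

lemma recfn_Suc: "recfn k G \<Longrightarrow> recfn k (\<lambda>xs. Suc (G xs))"
proof -
  have "rec_eval Sc ys (Suc (ys ! 0))" if "length ys = 1" for ys
    using that by (cases ys) (auto intro: rec_eval.succ)
  then have "recfn 1 (\<lambda>ys. Suc (ys ! 0))" unfolding recfn_def by blast
  then show "recfn k G \<Longrightarrow> recfn k (\<lambda>xs. Suc (G xs))" using recfn_comp1 by fastforce
qed

lemma recfn_const: "recfn k (\<lambda>_. c)"
  by (induction c) (auto intro: recfn_zero recfn_Suc)

lemma recfn_prim_rec:
  assumes "k' = Suc k" and "recfn k F" and "recfn (Suc k') G"
    and h_0: "\<And>ys. h 0 ys = F ys" and h_Suc: "\<And>n ys. h (Suc n) ys = G (n # h n ys # ys)"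
  shows "recfn k' (\<lambda>xs. h (hd xs) (tl xs))"
proof -
  obtain f where f: "\<And>ys. length ys = k \<Longrightarrow> rec_eval f ys (F ys)" using assms(2) recfn_def by blast
  obtain g where g: "\<And>zs. length zs = Suc (Suc k) \<Longrightarrow> rec_eval g zs (G zs)"
    using assms(1,3) recfn_def by blast
  have "rec_eval (Pr f g) (n # ys) (h n ys)" if "length ys = k" for n ys
  proof (induction n)
    case 0
    then show ?case using f[OF that] by (simp add: h_0 rec_eval.pr0)
  next
    case (Suc n)
    then show ?case using g[of "n # h n ys # ys"] that by (simp add: h_Suc rec_eval.prS)
  qed
  then have "rec_eval (Pr f g) xs (h (hd xs) (tl xs))" if "length xs = Suc k" for xs
    using that by (cases xs) auto
  then show ?thesis unfolding recfn_def assms(1) by blast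
qed

lemma recfn_add: "recfn k A \<Longrightarrow> recfn k B \<Longrightarrow> recfn k (\<lambda>xs. A xs + B xs)"
proof -
  have "recfn 2 (\<lambda>xs. (\<lambda>n ys. n + ys ! 0) (hd xs) (tl xs))"
    by (rule recfn_prim_rec[where k = 1 and h = "\<lambda>n ys. n + ys ! 0" and F = "\<lambda>ys. ys ! 0"
          and G = "\<lambda>zs. Suc (zs ! 1)"])
      (auto intro!: recfn_proj recfn_Suc)
  then have "recfn 2 (\<lambda>xs. xs ! 0 + xs ! 1)"
    by (rule recfn_cong) (auto simp: numeral_2_eq_2 length_Suc_conv)
  then show "recfn k A \<Longrightarrow> recfn k B \<Longrightarrow> recfn k (\<lambda>xs. A xs + B xs)"
    using recfn_comp2 by fastforce
qed

lemma recfn_mult: "recfn k A \<Longrightarrow> recfn k B \<Longrightarrow> recfn k (\<lambda>xs. A xs * B xs)"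
proof -
  have "recfn 2 (\<lambda>xs. (\<lambda>n ys. n * ys ! 0) (hd xs) (tl xs))"
    by (rule recfn_prim_rec[where k = 1 and h = "\<lambda>n ys. n * ys ! 0" and F = "\<lambda>_. 0"
          and G = "\<lambda>zs. zs ! 2 + zs ! 1"])
      (auto intro!: recfn_zero recfn_add recfn_proj)
  then have "recfn 2 (\<lambda>xs. xs ! 0 * xs ! 1)"
    by (rule recfn_cong) (auto simp: numeral_2_eq_2 length_Suc_conv)
  then show "recfn k A \<Longrightarrow> recfn k B \<Longrightarrow> recfn k (\<lambda>xs. A xs * B xs)"
    using recfn_comp2 by fastforce
qed

lemma recfn_diff: "recfn k A \<Longrightarrow> recfn k B \<Longrightarrow> recfn k (\<lambda>xs. A xs - B xs)"
proof -
  have "recfn 1 (\<lambda>xs. (\<lambda>n ys. n - 1) (hd xs) (tl xs))"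
    by (rule recfn_prim_rec[where k = 0 and h = "\<lambda>n ys. n - 1" and F = "\<lambda>_. 0"
          and G = "\<lambda>zs. zs ! 0"])
      (auto intro!: recfn_zero recfn_proj)
  then have pred: "recfn 1 (\<lambda>xs. xs ! 0 - 1)"
    by (rule recfn_cong) (auto simp: length_Suc_conv)
  have "recfn 2 (\<lambda>xs. (\<lambda>n ys. ys ! 0 - n) (hd xs) (tl xs))"
    by (rule recfn_prim_rec[where k = 1 and h = "\<lambda>n ys. ys ! 0 - n" and F = "\<lambda>ys. ys ! 0"
          and G = "\<lambda>zs. zs ! 1 - 1"])
      (auto intro!: recfn_proj recfn_comp1[OF pred, of _ "\<lambda>zs. zs ! 1", simplified])
  then have "recfn 2 (\<lambda>xs. xs ! 1 - xs ! 0)"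
    by (rule recfn_cong) (auto simp: numeral_2_eq_2 length_Suc_conv)
  then show "recfn k A \<Longrightarrow> recfn k B \<Longrightarrow> recfn k (\<lambda>xs. A xs - B xs)"
    using recfn_comp2[where F = "\<lambda>xs. xs ! 1 - xs ! 0" and G\<^sub>1 = B and G\<^sub>2 = A] by simp
qed

text \<open>With truncated subtraction, \<open>1 - (Y - X)\<close> is the indicator of \<open>Y \<le> X\<close>.\<close>
lemma recfn_if_less:
  assumes "recfn k X" "recfn k Y" "recfn k U" "recfn k V"
  shows "recfn k (\<lambda>xs. if X xs < Y xs then U xs else V xs)"
proof -
  have "recfn k (\<lambda>xs. U xs * (1 - (1 - (Y xs - X xs))) + V xs * (1 - (Y xs - X xs)))"
    by (intro recfn_add recfn_mult recfn_diff recfn_const assms)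
  then show ?thesis by (rule recfn_cong) auto
qed

lemma total_recursive2_iff_recfn: "total_recursive2 a \<longleftrightarrow> recfn 2 (\<lambda>xs. a (xs ! 0) (xs ! 1))"
proof
  assume "total_recursive2 a"
  then obtain r where r: "\<And>x y. rec_eval r [x, y] (a x y)" unfolding total_recursive2_def by blast
  have "rec_eval r xs (a (xs ! 0) (xs ! 1))" if "length xs = 2" for xs
  proof -
    from that have "xs = [xs ! 0, xs ! 1]" by (auto simp: numeral_2_eq_2 length_Suc_conv)
    then show ?thesis by (metis r)
  qed
  then show "recfn 2 (\<lambda>xs. a (xs ! 0) (xs ! 1))" unfolding recfn_def by blast
next
  assume "recfn 2 (\<lambda>xs. a (xs ! 0) (xs ! 1))"
  then obtain r where "\<And>xs. length xs = 2 \<Longrightarrow> rec_eval r xs (a (xs ! 0) (xs ! 1))"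
    unfolding recfn_def by blast
  then have "rec_eval r [x, y] (a x y)" for x y
    by (metis length_Cons list.size(3) nth_Cons_0 nth_Cons_Suc numeral_2_eq_2 One_nat_def)
  then show "total_recursive2 a" unfolding total_recursive2_def by blast
qed

lemma recfn_total_recursive2:
  "total_recursive2 a \<Longrightarrow> recfn k U \<Longrightarrow> recfn k V \<Longrightarrow> recfn k (\<lambda>xs. a (U xs) (V xs))"
  using recfn_comp2 unfolding total_recursive2_iff_recfn by fastforce

definition nat_frac :: "(nat \<Rightarrow> nat \<Rightarrow> nat) \<Rightarrow> (nat \<Rightarrow> nat \<Rightarrow> nat) \<Rightarrow> (nat \<Rightarrow> nat \<Rightarrow> nat) \<Rightarrow>
    nat \<Rightarrow> nat \<Rightarrow> rat" where
  "nat_frac a b d n c = (of_nat (a n c) - of_nat (b n c)) / of_nat (Suc (d n c))"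

lemma rec_rat_fun_iff_nat_frac:
  "rec_rat_fun f \<longleftrightarrow> (\<exists>a b d. total_recursive2 a \<and> total_recursive2 b \<and> total_recursive2 d \<and>
     (\<forall>n s. f n s = nat_frac a b d n (str_code s)))"
  unfolding rec_rat_fun_def nat_frac_def ..

lemma nat_frac_less_iff:
  "nat_frac a b d k c < nat_frac a b d k' c \<longleftrightarrow>
     a k c * Suc (d k' c) + b k' c * Suc (d k c) < a k' c * Suc (d k c) + b k c * Suc (d k' c)"
proof -
  have "nat_frac a b d k c < nat_frac a b d k' c \<longleftrightarrow>
      (of_nat (a k c) - of_nat (b k c)) * of_nat (Suc (d k' c))
        < ((of_nat (a k' c) - of_nat (b k' c)) * of_nat (Suc (d k c)) :: rat)"
    unfolding nat_frac_def by (simp add: divide_less_eq less_divide_eq del: of_nat_Suc)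
  also have "\<dots> \<longleftrightarrow> (of_nat (a k c * Suc (d k' c) + b k' c * Suc (d k c)) :: rat)
      < of_nat (a k' c * Suc (d k c) + b k c * Suc (d k' c))"
    by (simp only: of_nat_add of_nat_mult) (simp add: algebra_simps del: of_nat_Suc)
  finally show ?thesis by (simp only: of_nat_less_iff)
qed

lemma total_recursive2_compose:
  assumes "total_recursive2 h" and "total_recursive2 i"
  shows "total_recursive2 (\<lambda>n c. h (i n c) c)"
proof -
  have "recfn 2 (\<lambda>xs. i (xs ! 0) (xs ! 1))"
    using assms(2) by (simp only: total_recursive2_iff_recfn)
  then have "recfn 2 (\<lambda>xs. h (i (xs ! 0) (xs ! 1)) (xs ! 1))"
    by (rule recfn_total_recursive2[OF assms(1) _ recfn_proj]) simp
  then show ?thesis by (simp only: total_recursive2_iff_recfn)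
qed

definition running_argmax :: "(nat \<Rightarrow> nat \<Rightarrow> rat) \<Rightarrow> nat \<Rightarrow> nat \<Rightarrow> nat" where
  "running_argmax v n c = rec_nat 0 (\<lambda>m r. if v r c < v (Suc m) c then Suc m else r) n"

lemma running_argmax_0 [simp]: "running_argmax v 0 c = 0"
  by (simp add: running_argmax_def)

lemma running_argmax_Suc [simp]:
  "running_argmax v (Suc n) c =
     (if v (running_argmax v n c) c < v (Suc n) c then Suc n else running_argmax v n c)"
  by (simp add: running_argmax_def)

lemma le_running_argmax: "v n c \<le> v (running_argmax v n c) c"
  by (cases n) auto

lemma running_argmax_mono: "v (running_argmax v n c) c \<le> v (running_argmax v (Suc n) c) c"
  by auto

lemma total_recursive2_running_argmax:
  assumes "total_recursive2 a" "total_recursive2 b" "total_recursive2 d"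
  shows "total_recursive2 (running_argmax (nat_frac a b d))"
proof -
  let ?better = "\<lambda>zs. a (zs ! 1) (zs ! 2) * Suc (d (Suc (zs ! 0)) (zs ! 2))
      + b (Suc (zs ! 0)) (zs ! 2) * Suc (d (zs ! 1) (zs ! 2))
    < a (Suc (zs ! 0)) (zs ! 2) * Suc (d (zs ! 1) (zs ! 2))
      + b (zs ! 1) (zs ! 2) * Suc (d (Suc (zs ! 0)) (zs ! 2))"
  have "recfn 2 (\<lambda>xs. (\<lambda>n ys. running_argmax (nat_frac a b d) n (ys ! 0)) (hd xs) (tl xs))"
  proof (rule recfn_prim_rec[where k = 1 and F = "\<lambda>_. 0"
        and G = "\<lambda>zs. if ?better zs then Suc (zs ! 0) else zs ! 1"])
    show "recfn (Suc 2) (\<lambda>zs. if ?better zs then Suc (zs ! 0) else zs ! 1)"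
      by (intro recfn_if_less recfn_add recfn_mult recfn_Suc recfn_proj
          recfn_total_recursive2[OF assms(1)] recfn_total_recursive2[OF assms(2)]
          recfn_total_recursive2[OF assms(3)]; simp)
  qed (simp_all add: recfn_zero nat_frac_less_iff)
  then have "recfn 2 (\<lambda>xs. running_argmax (nat_frac a b d) (xs ! 0) (xs ! 1))"
    by (rule recfn_cong) (auto simp: numeral_2_eq_2 length_Suc_conv)
  then show ?thesis by (simp add: total_recursive2_iff_recfn)
qed

text \<open>Approximations from below, such as the diagonal entries of a lower-computable
  semi-POVM, need not increase; their running maxima do.\<close>
lemma rec_rat_fun_monotone_majorant:
  assumes "rec_rat_fun p"
  obtains g where "rec_rat_fun g" and "\<And>n s. p n s \<le> g n s" and "\<And>n s. g n s \<le> g (Suc n) s"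
    and "\<And>n s. \<exists>k. g n s = p k s"
proof -
  obtain a b d where rec: "total_recursive2 a" "total_recursive2 b" "total_recursive2 d"
    and p: "\<And>n s. p n s = nat_frac a b d n (str_code s)"
    using assms unfolding rec_rat_fun_iff_nat_frac by blast
  let ?v = "nat_frac a b d" and ?i = "running_argmax (nat_frac a b d)"
  define g where "g n s = ?v (?i n (str_code s)) (str_code s)" for n s
  have "g n s = nat_frac (\<lambda>n c. a (?i n c) c) (\<lambda>n c. b (?i n c) c) (\<lambda>n c. d (?i n c) c)
      n (str_code s)" for n s
    unfolding g_def nat_frac_def ..
  then have "rec_rat_fun g"
    unfolding rec_rat_fun_iff_nat_frac
    using rec total_recursive2_compose[OF _ total_recursive2_running_argmax[OF rec]] by blast
  moreover have "p n s \<le> g n s" for n s unfolding p g_def by (rule le_running_argmax)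
  moreover have "g n s \<le> g (Suc n) s" for n s unfolding g_def by (rule running_argmax_mono)
  moreover have "\<exists>k. g n s = p k s" for n s unfolding p g_def by blast
  ultimately show ?thesis using that by blast
qed

section \<open>Scalar semi-POVMs and diagonals of semi-POVMs\<close>

lemma rec_rat_fun_zero: "rec_rat_fun (\<lambda>n s. 0)"
proof -
  have "total_recursive2 (\<lambda>x y. 0)" unfolding total_recursive2_def by (blast intro: rec_eval.zero)
  then show ?thesis unfolding rec_rat_fun_def by (intro exI[of _ "\<lambda>x y. 0"]) simp
qed

lemma rec_herQ_fun_scalar_mat:
  assumes "rec_rat_fun f"
  shows "rec_herQ_fun (\<lambda>n s. real_of_rat (f n s) *\<^sub>R (mat 1 :: 'n::finite cmat))"
  unfolding rec_herQ_fun_def her_Q_def gauss_rat_def scalar_mat_entry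
proof (intro conjI allI hermitian_scalar_mat)
  fix i j :: 'n
  show "\<exists>p q. rec_rat_fun p \<and> rec_rat_fun q \<and> (\<forall>n s.
      Re (if i = j then complex_of_real (real_of_rat (f n s)) else 0) = real_of_rat (p n s) \<and>
      Im (if i = j then complex_of_real (real_of_rat (f n s)) else 0) = real_of_rat (q n s))"
    using assms rec_rat_fun_zero by (cases "i = j") force+
qed simp_all

lemma semi_POVM_scalar_mat:
  assumes "semi_measure m"
  shows "semi_POVM (\<lambda>s. m s *\<^sub>R (mat 1 :: 'n::finite cmat))"
proof -
  have nonneg: "\<And>s. 0 \<le> m s" and summable: "m summable_on UNIV"
    and le_1: "(\<Sum>\<^sub>\<infinity>s. m s) \<le> 1"
    using assms unfolding semi_measure_def by auto
  show ?thesis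
    unfolding semi_POVM_def
  proof (intro conjI allI psd_scalar_mat nonneg)
    show "(\<lambda>s. m s *\<^sub>R (mat 1 :: 'n cmat)) summable_on UNIV"
      using summable by (rule summable_on_scaleR_left)
    have "(\<Sum>\<^sub>\<infinity>s. m s *\<^sub>R (mat 1 :: 'n cmat)) = (\<Sum>\<^sub>\<infinity>s. m s) *\<^sub>R mat 1"
      using summable by (rule infsum_scaleR_left)
    moreover have "loewner_le ((\<Sum>\<^sub>\<infinity>s. m s) *\<^sub>R mat 1) (1 *\<^sub>R mat 1 :: 'n cmat)"
      using le_1 by (rule loewner_le_scalar_mat)
    ultimately show "loewner_le (\<Sum>\<^sub>\<infinity>s. m s *\<^sub>R (mat 1 :: 'n cmat)) (mat 1)" by simp
  qed
qed

lemma lower_computable_semi_POVM_scalar_mat: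
  assumes "lower_computable_semi_measure m"
  shows "lower_computable_semi_POVM (\<lambda>s. m s *\<^sub>R (mat 1 :: 'n::finite cmat))"
proof -
  obtain f where f: "rec_rat_fun f" and lim: "\<And>s. (\<lambda>n. real_of_rat (f n s)) \<longlonglongrightarrow> m s"
    and mono: "\<And>n s. f n s \<le> f (Suc n) s"
    using assms unfolding lower_computable_semi_measure_def by blast
  have "real_of_rat (f n s) \<le> m s" for n s
    by (rule incseq_le[OF _ lim]) (simp add: incseq_SucI of_rat_less_eq mono)
  then have "loewner_le (real_of_rat (f n s) *\<^sub>R mat 1) (m s *\<^sub>R (mat 1 :: 'n cmat))" for n s
    by (rule loewner_le_scalar_mat)
  moreover have "(\<lambda>n. real_of_rat (f n s) *\<^sub>R (mat 1 :: 'n cmat)) \<longlonglongrightarrow> m s *\<^sub>R mat 1" for s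
    by (intro tendsto_scaleR lim tendsto_const)
  ultimately show ?thesis
    unfolding lower_computable_semi_POVM_def
    using semi_POVM_scalar_mat rec_herQ_fun_scalar_mat[OF f] assms
    unfolding lower_computable_semi_measure_def by blast
qed

lemma semi_measure_diag:
  assumes "semi_POVM M"
  shows "semi_measure (\<lambda>s. Re (M s $ i $ i))"
proof -
  have "bounded_linear (\<lambda>A::'a cmat. Re (A $ i $ i))"
    by (intro bounded_linear_compose[OF bounded_linear_Re]
        bounded_linear_compose[OF bounded_linear_vec_nth bounded_linear_vec_nth])
  then have "((\<lambda>s. Re (M s $ i $ i)) has_sum Re ((\<Sum>\<^sub>\<infinity>s. M s) $ i $ i)) UNIV"
    using assms unfolding semi_POVM_def by (auto intro: has_sum_bounded_linear has_sum_infsum)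
  moreover have "Re ((\<Sum>\<^sub>\<infinity>s. M s) $ i $ i) \<le> 1"
    using assms psd_diag_nonneg[of "mat 1 - (\<Sum>\<^sub>\<infinity>s. M s)" i]
    unfolding semi_POVM_def loewner_le_def by (simp add: mat_def)
  ultimately show ?thesis
    using assms psd_diag_nonneg unfolding semi_POVM_def semi_measure_def
    by (auto simp: has_sum_imp_summable infsumI)
qed

lemma lower_computable_semi_measure_diag:
  assumes "lower_computable_semi_POVM M"
  shows "lower_computable_semi_measure (\<lambda>s. Re (M s $ i $ i))"
proof -
  obtain f where f: "rec_herQ_fun f" and lim: "\<And>s. (\<lambda>n. f n s) \<longlonglongrightarrow> M s"
    and below: "\<And>n s. loewner_le (f n s) (M s)"
    using assms unfolding lower_computable_semi_POVM_def by blast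
  obtain p where p: "rec_rat_fun p" and p_eq: "\<And>n s. Re (f n s $ i $ i) = real_of_rat (p n s)"
    using f unfolding rec_herQ_fun_def by blast
  obtain g where g: "rec_rat_fun g" and p_le_g: "\<And>n s. p n s \<le> g n s"
    and g_mono: "\<And>n s. g n s \<le> g (Suc n) s" and g_val: "\<And>n s. \<exists>k. g n s = p k s"
    using rec_rat_fun_monotone_majorant[OF p] by blast
  have p_le: "real_of_rat (p n s) \<le> Re (M s $ i $ i)" for n s
    using psd_diag_nonneg[of "M s - f n s" i] below[of n s]
    unfolding loewner_le_def p_eq[symmetric] by simp
  have "(\<lambda>n. real_of_rat (g n s)) \<longlonglongrightarrow> Re (M s $ i $ i)" for s
  proof (rule tendsto_sandwich[of "\<lambda>n. real_of_rat (p n s)" _ _ "\<lambda>_. Re (M s $ i $ i)"])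
    show "(\<lambda>n. real_of_rat (p n s)) \<longlonglongrightarrow> Re (M s $ i $ i)"
      unfolding p_eq[symmetric] by (intro tendsto_intros lim)
    have "real_of_rat (g n s) \<le> Re (M s $ i $ i)" for n
      using g_val[of n s] p_le by auto
    then show "\<forall>\<^sub>F n in sequentially. real_of_rat (g n s) \<le> Re (M s $ i $ i)"
      by (simp add: always_eventually)
  qed (use p_le_g in \<open>simp_all add: of_rat_less_eq\<close>)
  then show ?thesis
    unfolding lower_computable_semi_measure_def
    using assms semi_measure_diag g g_mono unfolding lower_computable_semi_POVM_def by blast
qed

theorem mainTheorem8:
  fixes m :: "bstring \<Rightarrow> real" and M :: "bstring \<Rightarrow> complex^'n::finite^'n"
  assumes "universal_probability m" and "universal_semi_POVM M"
  shows "\<exists>c1>0. \<exists>c2>0. \<forall>\<rho>::complex^'n^'n. \<forall>s. density_matrix \<rho> \<longrightarrow>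
           c1 * m s \<le> Re (trace (\<rho> ** M s)) \<and> Re (trace (\<rho> ** M s)) \<le> c2 * m s"
proof -
  have m: "lower_computable_semi_measure m" and M: "lower_computable_semi_POVM M"
    using assms unfolding universal_probability_def universal_semi_POVM_def by simp_all
  obtain c1 where "c1 > 0" and "\<And>s. loewner_le (c1 *\<^sub>R (m s *\<^sub>R mat 1)) (M s)"
    using assms(2) lower_computable_semi_POVM_scalar_mat[OF m] unfolding universal_semi_POVM_def
    by blast
  then have lower: "c1 * m s \<le> Re (trace (\<rho> ** M s))" if "density_matrix \<rho>" for \<rho> s
    using trace_mult_density_ge[OF that] by simp
  have "\<forall>i. \<exists>C>0. \<forall>s. C * Re (M s $ i $ i) \<le> m s"
    using assms(1) lower_computable_semi_measure_diag[OF M] unfolding universal_probability_def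
    by blast
  then obtain C where "\<And>i. C i > 0" and "\<And>i s. C i * Re (M s $ i $ i) \<le> m s" by metis
  moreover have "psd (M s)" for s
    using M unfolding lower_computable_semi_POVM_def semi_POVM_def by blast
  ultimately have "\<exists>c2>0. \<forall>\<rho> s. density_matrix \<rho> \<longrightarrow> Re (trace (\<rho> ** M s)) \<le> c2 * m s"
    by (rule uniform_trace_mult_density_bound)
  with \<open>c1 > 0\<close> lower show ?thesis by blast
qed

end
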